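(* Let $I$ be a compact interval, $k\ge 2$ an integer, $u\in(0,1]$ and $\tau\in(0,1)$. If $\tau(1+\tau)^{k-2}\ge u$, then $\mathrm{Diff}_+^{1,\tau}(I)$ does not contain a $(k,u)$-nesting.
   Context: $\mathrm{Diff}_+^{1,\tau}(I)$ is the group of orientation-preserving $C^1$-diffeomorphisms of $I$ whose derivative is $\tau$-Hölder continuous. For an integer $k\ge2$ and $u\in(0,1]$, a finite set $S\subseteq\mathrm{Homeo}_+(I)$ is a $(k,u)$-nesting if there exist nonempty open intervals $J_1\supsetneq J_2\supsetneq\cdots\supsetneq J_k$ and an infinite sequence $(s_1,s_2,\ldots)$ of elements of $S$ such that, with $w_n=s_ns_{n-1}\cdots s_1$ for $n\ge0$ ($w_0$ the identity): (i) $\sum_{n\ge0}|w_nJ_1|^u<\infty$, where $|\cdot|$ is length; (ii) for each $i=2,\ldots,k$ and each $n\ge0$ there is $s\in S$ (possibly depending on $i,n$) with $sw_nJ_i\cap w_nJ_i=\varnothing$ and $sw_nJ_{i-1}=w_nJ_{i-1}$. *)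

theory Defs
  imports "HOL-Analysis.Analysis"
begin

text \<open>Orientation-preserving homeomorphisms of the compact interval I = [a,b],
  represented as real functions (only their values on I matter).\<close>
definition Homeo_plus :: "real \<Rightarrow> real \<Rightarrow> (real \<Rightarrow> real) set" where
  "Homeo_plus a b = {f. continuous_on {a..b} f \<and> bij_betw f {a..b} {a..b}
                        \<and> strict_mono_on {a..b} f}"

definition Diff_plus_1_tau :: "real \<Rightarrow> real \<Rightarrow> real \<Rightarrow> (real \<Rightarrow> real) set" where
  "Diff_plus_1_tau a b \<tau> = {f. f \<in> Homeo_plus a b \<and>
     (\<exists>f'. (\<forall>x\<in>{a..b}. (f has_real_derivative f' x) (at x within {a..b}) \<and> f' x > 0)
         \<and> continuous_on {a..b} f'
         \<and> (\<exists>C. \<forall>x\<in>{a..b}. \<forall>y\<in>{a..b}. \<bar>f' x - f' y\<bar> \<le> C * \<bar>x - y\<bar> powr \<tau>))}"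

definition ilen :: "real set \<Rightarrow> real" where
  "ilen A = Sup A - Inf A"

definition open_subint :: "real \<Rightarrow> real \<Rightarrow> real set \<Rightarrow> bool" where
  "open_subint a b J \<longleftrightarrow> (\<exists>c d. a \<le> c \<and> c < d \<and> d \<le> b \<and> J = {c<..<d})"

text \<open>Words: wrd s 0 = id and wrd s (n+1) = s n \<circ> wrd s n; so s 0, s 1, ...
  play the role of s_1, s_2, ... in the paper and wrd s n = w_n.\<close>
primrec wrd :: "(nat \<Rightarrow> real \<Rightarrow> real) \<Rightarrow> nat \<Rightarrow> real \<Rightarrow> real" where
  "wrd s 0 = id"
| "wrd s (Suc n) = s n \<circ> wrd s n"

text \<open>(k,u)-nesting; the intervals J_1,...,J_k are J 1, ..., J k.\<close>
definition is_nesting :: "real \<Rightarrow> real \<Rightarrow> nat \<Rightarrow> real \<Rightarrow> (real \<Rightarrow> real) set \<Rightarrow> bool" where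
  "is_nesting a b k u S \<longleftrightarrow> finite S \<and> S \<subseteq> Homeo_plus a b \<and>
     (\<exists>J :: nat \<Rightarrow> real set. \<exists>s :: nat \<Rightarrow> real \<Rightarrow> real.
        (\<forall>i\<in>{1..k}. open_subint a b (J i)) \<and>
        (\<forall>i\<in>{1..<k}. J (Suc i) \<subset> J i) \<and>
        (\<forall>n. s n \<in> S) \<and>
        summable (\<lambda>n. ilen (wrd s n ` J 1) powr u) \<and>
        (\<forall>i\<in>{2..k}. \<forall>n. \<exists>g\<in>S.
            g ` (wrd s n ` J i) \<inter> wrd s n ` J i = {} \<and>
            g ` (wrd s n ` J (i - 1)) = wrd s n ` J (i - 1)))"

end

theory Submission
  imports Defs
begin

text \<open>
  All maps of a finite set S in Diff_plus_1_tau have derivatives bounded below by a common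
  m > 0 and Hoelder with a common constant C. Write L_i(n) for the length of w_n J_i. A map of S
  preserving w_n J_(i-1) fixes its endpoints, so by the mean value theorem its derivative equals 1
  somewhere there and it moves points by at most C L_(i-1)(n)^(1+\<tau>); since it moves w_n J_i off
  itself, L_i(n) \<le> C L_(i-1)(n)^(1+\<tau>). Starting from the summability of L_1(n)^u this makes
  L_i(n)^(u/(1+\<tau>)^(i-1)) summable, and the hypothesis on u makes L_(k-1)(n)^\<tau> summable.
  Then the composition w_n has bounded distortion on J_(k-1), so L_k(n) \<ge> c L_(k-1)(n) for some
  c > 0, which contradicts L_k(n) \<le> C L_(k-1)(n)^(1+\<tau>) as L_(k-1)(n) \<rightarrow> 0.
\<close>

section \<open>Orientation-preserving homeomorphisms of an interval\<close>

lemma Homeo_plus_strict_mono: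
  "f \<in> Homeo_plus a b \<Longrightarrow> x \<in> {a..b} \<Longrightarrow> y \<in> {a..b} \<Longrightarrow> x < y \<Longrightarrow> f x < f y"
  by (auto simp: Homeo_plus_def strict_mono_on_def)

lemma Homeo_plus_mono:
  "f \<in> Homeo_plus a b \<Longrightarrow> x \<in> {a..b} \<Longrightarrow> y \<in> {a..b} \<Longrightarrow> x \<le> y \<Longrightarrow> f x \<le> f y"
  by (metis Homeo_plus_strict_mono order_le_less)

lemma Homeo_plus_in: "f \<in> Homeo_plus a b \<Longrightarrow> x \<in> {a..b} \<Longrightarrow> f x \<in> {a..b}"
  by (auto simp: Homeo_plus_def bij_betw_def)

lemma Homeo_plus_nested:
  assumes "f \<in> Homeo_plus a b" "a \<le> c1" "c1 \<le> c2" "c2 < d2" "d2 \<le> d1" "d1 \<le> b"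
  shows "a \<le> f c1 \<and> f c1 \<le> f c2 \<and> f c2 < f d2 \<and> f d2 \<le> f d1 \<and> f d1 \<le> b"
  using Homeo_plus_in[OF assms(1), of c1] Homeo_plus_in[OF assms(1), of d1]
    Homeo_plus_mono[OF assms(1), of c1 c2] Homeo_plus_mono[OF assms(1), of d2 d1]
    Homeo_plus_strict_mono[OF assms(1), of c2 d2] assms(2-)
  by auto

lemma Homeo_plus_image_greaterThanLessThan:
  assumes f: "f \<in> Homeo_plus a b" and "a \<le> c" "c < d" "d \<le> b"
  shows "f ` {c<..<d} = {f c<..<f d}"
proof
  show "f ` {c<..<d} \<subseteq> {f c<..<f d}"
    using Homeo_plus_strict_mono[OF f] assms(2-) by auto
  show "{f c<..<f d} \<subseteq> f ` {c<..<d}"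
  proof
    fix y assume y: "y \<in> {f c<..<f d}"
    have "continuous_on {c..d} f"
      using f assms(2-) by (auto simp: Homeo_plus_def elim: continuous_on_subset)
    then obtain x where "c \<le> x" "x \<le> d" "f x = y"
      using IVT'[of f c y d] y \<open>c < d\<close> by auto
    moreover from this have "x \<noteq> c" "x \<noteq> d" using y by auto
    ultimately show "y \<in> f ` {c<..<d}" by force
  qed
qed

lemma Homeo_plus_id: "id \<in> Homeo_plus a b"
  by (auto simp: Homeo_plus_def strict_mono_on_def)

lemma Homeo_plus_comp:
  assumes f: "f \<in> Homeo_plus a b" and g: "g \<in> Homeo_plus a b"
  shows "g \<circ> f \<in> Homeo_plus a b"
proof -
  have "f ` {a..b} = {a..b}" using f by (simp add: Homeo_plus_def bij_betw_def)
  then have "continuous_on {a..b} (g \<circ> f)"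
    using f g by (intro continuous_on_compose) (auto simp: Homeo_plus_def)
  moreover have "bij_betw (g \<circ> f) {a..b} {a..b}"
    using f g by (auto simp: Homeo_plus_def intro: bij_betw_trans)
  moreover have "strict_mono_on {a..b} (g \<circ> f)"
    using Homeo_plus_strict_mono[OF f] Homeo_plus_strict_mono[OF g] Homeo_plus_in[OF f]
    by (auto simp: strict_mono_on_def)
  ultimately show ?thesis by (simp add: Homeo_plus_def)
qed

lemma wrd_Homeo_plus: "(\<And>n. s n \<in> Homeo_plus a b) \<Longrightarrow> wrd s n \<in> Homeo_plus a b"
  by (induction n) (simp_all add: Homeo_plus_id Homeo_plus_comp)

lemma Homeo_plus_invariant_interval_fixes_endpoints:
  assumes f: "f \<in> Homeo_plus a b" and "a \<le> p" "p < q" "q \<le> b"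
    and inv: "f ` {p<..<q} = {p<..<q}"
  shows "f p = p" and "f q = q"
proof -
  have "{f p<..<f q} = {p<..<q}"
    using inv Homeo_plus_image_greaterThanLessThan[OF f] assms(2-4) by simp
  moreover have "f p < f q" using Homeo_plus_strict_mono[OF f] assms(2-4) by auto
  ultimately show "f p = p" "f q = q"
    using \<open>p < q\<close> by (metis cInf_greaterThanLessThan cSup_greaterThanLessThan)+
qed

lemma disjoint_greaterThanLessThan:
  fixes \<alpha> \<beta> \<gamma> \<delta> :: real
  assumes "\<alpha> < \<beta>" "\<gamma> < \<delta>" "{\<alpha><..<\<beta>} \<inter> {\<gamma><..<\<delta>} = {}"
  shows "\<beta> \<le> \<gamma> \<or> \<delta> \<le> \<alpha>"
proof (rule ccontr)
  assume "\<not> ?thesis"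
  then have "(max \<alpha> \<gamma> + min \<beta> \<delta>) / 2 \<in> {\<alpha><..<\<beta>} \<inter> {\<gamma><..<\<delta>}" using assms by auto
  then show False using assms by auto
qed

section \<open>Hoelder continuous derivatives\<close>

definition holder_C1_on :: "real set \<Rightarrow> real \<Rightarrow> real \<Rightarrow> real \<Rightarrow> (real \<Rightarrow> real) \<Rightarrow> bool" where
  "holder_C1_on A \<tau> m C f \<longleftrightarrow> (\<exists>f'.
     (\<forall>x\<in>A. (f has_real_derivative f' x) (at x within A) \<and> m \<le> f' x) \<and>
     (\<forall>x\<in>A. \<forall>y\<in>A. \<bar>f' x - f' y\<bar> \<le> C * \<bar>x - y\<bar> powr \<tau>))"

lemma holder_C1_on_subset:
  "holder_C1_on A \<tau> m C f \<Longrightarrow> B \<subseteq> A \<Longrightarrow> holder_C1_on B \<tau> m C f"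
  unfolding holder_C1_on_def by (meson has_field_derivative_subset subsetD)

lemma holder_C1_on_mono:
  assumes "holder_C1_on A \<tau> m C f" "m' \<le> m" "C \<le> C'"
  shows "holder_C1_on A \<tau> m' C' f"
proof -
  have "C * \<bar>x - y\<bar> powr \<tau> \<le> C' * \<bar>x - y\<bar> powr \<tau>" for x y :: real
    using \<open>C \<le> C'\<close> by (simp add: mult_right_mono)
  then show ?thesis using assms(1,2) unfolding holder_C1_on_def by (meson order_trans)
qed

lemma Diff_plus_1_tau_holder_C1_on:
  assumes "f \<in> Diff_plus_1_tau a b \<tau>"
  shows "\<exists>m>0. \<exists>C>0. holder_C1_on {a..b} \<tau> m C f"
proof -
  obtain f' C where deriv: "\<forall>x\<in>{a..b}. (f has_real_derivative f' x) (at x within {a..b}) \<and> f' x > 0"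
    and cont: "continuous_on {a..b} f'"
    and holder: "\<forall>x\<in>{a..b}. \<forall>y\<in>{a..b}. \<bar>f' x - f' y\<bar> \<le> C * \<bar>x - y\<bar> powr \<tau>"
    using assms by (auto simp: Diff_plus_1_tau_def)
  obtain m where "m > 0" "\<forall>x\<in>{a..b}. m \<le> f' x"
  proof (cases "a \<le> b")
    case True
    then obtain x0 where "x0 \<in> {a..b}" "\<forall>y\<in>{a..b}. f' x0 \<le> f' y"
      using continuous_attains_inf[OF compact_Icc _ cont] by auto
    then show ?thesis using that deriv by force
  qed (use that[of 1] in auto)
  then have "holder_C1_on {a..b} \<tau> m (max C 1) f"
    using deriv holder holder_C1_on_mono[of "{a..b}" \<tau> m C f m "max C 1"]
    by (auto simp: holder_C1_on_def)
  with \<open>m > 0\<close> show ?thesis by (intro exI[of _ m] conjI exI[of _ "max C 1"]) auto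
qed

lemma finite_Diff_plus_1_tau_uniform_holder_C1_on:
  assumes "finite S" "S \<subseteq> Diff_plus_1_tau a b \<tau>"
  shows "\<exists>m>0. \<exists>C>0. \<forall>f\<in>S. holder_C1_on {a..b} \<tau> m C f"
  using assms
proof (induction S rule: finite_induct)
  case empty
  show ?case using zero_less_one by blast
next
  case (insert f S)
  obtain m C where "m > 0" "C > 0" and S: "\<forall>g\<in>S. holder_C1_on {a..b} \<tau> m C g"
    using insert.IH insert.prems by auto
  obtain m1 C1 where "m1 > 0" "C1 > 0" and f: "holder_C1_on {a..b} \<tau> m1 C1 f"
    using Diff_plus_1_tau_holder_C1_on insert.prems by blast
  have "\<forall>g\<in>insert f S. holder_C1_on {a..b} \<tau> (min m m1) (max C C1) g"
    using holder_C1_on_mono[OF f min.cobounded2 max.cobounded2]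
      holder_C1_on_mono[OF bspec[OF S] min.cobounded1 max.cobounded1] by blast
  moreover have "min m m1 > 0" "max C C1 > 0" using \<open>m > 0\<close> \<open>m1 > 0\<close> \<open>C > 0\<close> by auto
  ultimately show ?case by blast
qed

lemma mvt_real_derivative_within:
  assumes "c < d" "{c..d} \<subseteq> A"
    and "\<And>x. x \<in> {c..d} \<Longrightarrow> (f has_real_derivative f' x) (at x within A)"
  shows "\<exists>z\<in>{c<..<d}. f d - f c = (d - c) * f' z"
proof -
  have "(f has_derivative (*) (f' x)) (at x within {c..d})" if "c \<le> x" "x \<le> d" for x
    using has_field_derivative_subset[OF assms(3) assms(2)] that
    by (simp add: has_field_derivative_def)
  from mvt_simple[OF \<open>c < d\<close> this] show ?thesis by (auto simp: mult.commute)
qed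

text \<open>As g fixes c and d, the mean value theorem gives a point of (c, d) where g' = 1.\<close>
lemma holder_C1_on_displacement:
  assumes g: "holder_C1_on {c..d} \<tau> m C g" and "0 \<le> C" "0 \<le> \<tau>" "c < d"
    and fixed: "g c = c" "g d = d" and x: "x \<in> {c..d}"
  shows "\<bar>g x - x\<bar> \<le> C * (d - c) powr (1 + \<tau>)"
proof -
  obtain g' where deriv: "\<forall>x\<in>{c..d}. (g has_real_derivative g' x) (at x within {c..d})"
    and holder: "\<forall>x\<in>{c..d}. \<forall>y\<in>{c..d}. \<bar>g' x - g' y\<bar> \<le> C * \<bar>x - y\<bar> powr \<tau>"
    using g by (auto simp: holder_C1_on_def)
  obtain z where z: "z \<in> {c<..<d}" "g' z = 1"
    using mvt_real_derivative_within[of c d "{c..d}" g g'] deriv fixed \<open>c < d\<close> by auto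
  show ?thesis
  proof (cases "x = c")
    case True
    then show ?thesis using fixed \<open>0 \<le> C\<close> by simp
  next
    case False
    then obtain w where w: "w \<in> {c<..<x}" "g x - g c = (x - c) * g' w"
      using mvt_real_derivative_within[of c x "{c..d}" g g'] deriv x by auto
    have "g x - x = (x - c) * (g' w - g' z)"
      using w z fixed by (simp add: algebra_simps)
    then have "\<bar>g x - x\<bar> = (x - c) * \<bar>g' w - g' z\<bar>"
      using x by (simp add: abs_mult)
    also have "\<dots> \<le> (d - c) * (C * (d - c) powr \<tau>)"
    proof (rule mult_mono)
      have "w \<in> {c..d}" "z \<in> {c..d}" using w z x by auto
      then have "\<bar>g' w - g' z\<bar> \<le> C * \<bar>w - z\<bar> powr \<tau>" using holder by blast
      also have "\<dots> \<le> C * (d - c) powr \<tau>"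
        using w z x assms(2,3) by (intro mult_left_mono powr_mono2) auto
      finally show "\<bar>g' w - g' z\<bar> \<le> C * (d - c) powr \<tau>" .
    qed (use x \<open>0 \<le> C\<close> in auto)
    also have "\<dots> = C * (d - c) powr (1 + \<tau>)" using \<open>c < d\<close> by (simp add: powr_add)
    finally show ?thesis .
  qed
qed

lemma abs_ln_diff_le:
  fixes x y m :: real
  assumes "0 < m" "m \<le> x" "m \<le> y"
  shows "\<bar>ln x - ln y\<bar> \<le> \<bar>x - y\<bar> / m"
proof -
  have *: "ln q - ln p \<le> (q - p) / m" if "m \<le> p" "p \<le> q" for p q
  proof -
    have "ln q - ln p = ln (q / p)" using that \<open>0 < m\<close> by (simp add: ln_div)
    also have "\<dots> \<le> q / p - 1" using that \<open>0 < m\<close> by (intro ln_le_minus_one) simp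
    also have "\<dots> = (q - p) / p" using that \<open>0 < m\<close> by (simp add: field_simps)
    also have "\<dots> \<le> (q - p) / m" using that \<open>0 < m\<close> by (intro divide_left_mono) auto
    finally show ?thesis .
  qed
  show ?thesis
    using *[of x y] *[of y x] assms by (cases "x \<le> y") (auto simp: abs_if)
qed

text \<open>Compare the mean value quotients of f on the two intervals; ln is (1/m)-Lipschitz
  on [m, \<infinity>), where f' takes its values.\<close>
lemma holder_C1_on_ln_distortion:
  assumes f: "holder_C1_on {c..d} \<tau> m C f" and "0 < m" "0 \<le> C" "0 \<le> \<tau>"
    and "c \<le> c'" "c' < d'" "d' \<le> d"
  shows "ln (d' - c') - ln (d - c) - C / m * (d - c) powr \<tau>
           \<le> ln (f d' - f c') - ln (f d - f c)"
proof -
  obtain f' where deriv: "\<forall>x\<in>{c..d}. (f has_real_derivative f' x) (at x within {c..d}) \<and> m \<le> f' x"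
    and holder: "\<forall>x\<in>{c..d}. \<forall>y\<in>{c..d}. \<bar>f' x - f' y\<bar> \<le> C * \<bar>x - y\<bar> powr \<tau>"
    using f by (auto simp: holder_C1_on_def)
  obtain \<xi> where \<xi>: "\<xi> \<in> {c'<..<d'}" "f d' - f c' = (d' - c') * f' \<xi>"
    using mvt_real_derivative_within[of c' d' "{c..d}" f f'] deriv assms(5-) by auto
  obtain \<eta> where \<eta>: "\<eta> \<in> {c<..<d}" "f d - f c = (d - c) * f' \<eta>"
    using mvt_real_derivative_within[of c d "{c..d}" f f'] deriv assms(5-) by auto
  have lb: "m \<le> f' \<xi>" "m \<le> f' \<eta>" using deriv \<xi> \<eta> assms(5-) by auto
  have "\<bar>ln (f' \<xi>) - ln (f' \<eta>)\<bar> \<le> \<bar>f' \<xi> - f' \<eta>\<bar> / m"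
    using abs_ln_diff_le \<open>0 < m\<close> lb by blast
  also have "\<dots> \<le> C * \<bar>\<xi> - \<eta>\<bar> powr \<tau> / m"
    using holder \<xi> \<eta> assms(5-) \<open>0 < m\<close> by (intro divide_right_mono) auto
  also have "\<dots> \<le> C * (d - c) powr \<tau> / m"
    using \<xi> \<eta> assms by (intro divide_right_mono mult_left_mono powr_mono2) auto
  finally have "\<bar>ln (f' \<xi>) - ln (f' \<eta>)\<bar> \<le> C / m * (d - c) powr \<tau>" by simp
  moreover have "ln (f d' - f c') = ln (d' - c') + ln (f' \<xi>)"
    and "ln (f d - f c) = ln (d - c) + ln (f' \<eta>)"
    using \<xi> \<eta> lb \<open>0 < m\<close> assms(5-) by (simp_all add: ln_mult)
  ultimately show ?thesis by linarith
qed

lemma Homeo_plus_displaced_subinterval_length: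
  assumes g: "g \<in> Homeo_plus a b" "holder_C1_on {a..b} \<tau> m C g" and "0 \<le> C" "0 \<le> \<tau>"
    and "a \<le> p" "p \<le> p'" "p' < q'" "q' \<le> q" "q \<le> b"
    and inv: "g ` {p<..<q} = {p<..<q}" and disj: "g ` {p'<..<q'} \<inter> {p'<..<q'} = {}"
  shows "q' - p' \<le> C * (q - p) powr (1 + \<tau>)"
proof -
  have ends: "g p = p" "g q = q"
    using Homeo_plus_invariant_interval_fixes_endpoints[OF g(1) _ _ _ inv] assms(5-9) by auto
  have g_pq: "holder_C1_on {p..q} \<tau> m C g"
    using holder_C1_on_subset[OF g(2)] assms(5-9) by auto
  have "{g p'<..<g q'} \<inter> {p'<..<q'} = {}"
    using disj Homeo_plus_image_greaterThanLessThan[OF g(1)] assms(5-9) by simp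
  moreover have "g p' < g q'" using Homeo_plus_strict_mono[OF g(1)] assms(5-9) by auto
  ultimately have "g q' \<le> p' \<or> q' \<le> g p'" using disjoint_greaterThanLessThan \<open>p' < q'\<close> by blast
  moreover have "\<bar>g x - x\<bar> \<le> C * (q - p) powr (1 + \<tau>)" if "x \<in> {p'..q'}" for x
    using holder_C1_on_displacement[OF g_pq \<open>0 \<le> C\<close> \<open>0 \<le> \<tau>\<close> _ ends] that assms(5-9) by auto
  then have "\<bar>g p' - p'\<bar> \<le> C * (q - p) powr (1 + \<tau>)" "\<bar>g q' - q'\<bar> \<le> C * (q - p) powr (1 + \<tau>)"
    using \<open>p' < q'\<close> by auto
  ultimately show ?thesis by linarith
qed

section \<open>Summability of powers\<close>

lemma summable_powr_of_le_powr:
  fixes L L' :: "nat \<Rightarrow> real"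
  assumes "\<And>n. 0 \<le> L' n" "\<And>n. L' n \<le> C * L n powr (1 + \<tau>)" "0 \<le> C" "0 \<le> \<tau>" "0 \<le> e"
    and summ: "summable (\<lambda>n. L n powr e)"
  shows "summable (\<lambda>n. L' n powr (e / (1 + \<tau>)))"
proof (rule summable_comparison_test'[OF summable_mult[OF summ, of "C powr (e / (1 + \<tau>))"]])
  fix n
  have "L' n powr (e / (1 + \<tau>)) \<le> (C * L n powr (1 + \<tau>)) powr (e / (1 + \<tau>))"
    using assms by (intro powr_mono2) auto
  also have "\<dots> = C powr (e / (1 + \<tau>)) * L n powr e"
    using \<open>0 \<le> \<tau>\<close> by (simp add: powr_mult powr_powr)
  finally show "norm (L' n powr (e / (1 + \<tau>))) \<le> C powr (e / (1 + \<tau>)) * L n powr e" by simp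
qed

lemma summable_powr_nested_chain:
  fixes L :: "nat \<Rightarrow> nat \<Rightarrow> real"
  assumes nonneg: "\<And>i n. i \<in> {1..k} \<Longrightarrow> 0 \<le> L i n"
    and le: "\<And>i n. i \<in> {1..<k} \<Longrightarrow> L (Suc i) n \<le> C * L i n powr (1 + \<tau>)"
    and "0 \<le> C" "0 \<le> \<tau>" "0 \<le> u" and summ: "summable (\<lambda>n. L 1 n powr u)"
    and "j < k"
  shows "summable (\<lambda>n. L (Suc j) n powr (u / (1 + \<tau>) ^ j))"
  using \<open>j < k\<close>
proof (induction j)
  case 0
  show ?case using summ by simp
next
  case (Suc j)
  have "summable (\<lambda>n. L (Suc (Suc j)) n powr (u / (1 + \<tau>) ^ j / (1 + \<tau>)))"
    using summable_powr_of_le_powr[of "L (Suc (Suc j))" C "L (Suc j)" \<tau> "u / (1 + \<tau>) ^ j"]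
      nonneg le Suc assms(3-5) by simp
  then show ?case by (simp add: field_simps)
qed

lemma summable_powr_larger_exponent:
  fixes L :: "nat \<Rightarrow> real"
  assumes summ: "summable (\<lambda>n. L n powr e)" and "0 < e" "e \<le> e'" "\<And>n. 0 \<le> L n"
  shows "summable (\<lambda>n. L n powr e')"
proof (rule summable_comparison_test_ev[OF _ summ])
  have "eventually (\<lambda>n. L n powr e < 1) sequentially"
    using summable_LIMSEQ_zero[OF summ] by (rule order_tendstoD) simp
  then show "eventually (\<lambda>n. norm (L n powr e') \<le> L n powr e) sequentially"
  proof (rule eventually_mono)
    fix n assume "L n powr e < 1"
    then have "L n \<le> 1" using \<open>0 < e\<close> by (metis ge_one_powr_ge_zero less_le not_le)
    then show "norm (L n powr e') \<le> L n powr e" using assms by (simp add: powr_mono')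
  qed
qed

lemma summable_powr_nested_chain_last:
  fixes L :: "nat \<Rightarrow> nat \<Rightarrow> real"
  assumes nonneg: "\<And>i n. i \<in> {1..k} \<Longrightarrow> 0 \<le> L i n"
    and le: "\<And>i n. i \<in> {1..<k} \<Longrightarrow> L (Suc i) n \<le> C * L i n powr (1 + \<tau>)"
    and "0 \<le> C" "0 \<le> \<tau>" "0 < u" and summ: "summable (\<lambda>n. L 1 n powr u)"
    and "2 \<le> k" "u \<le> \<tau> * (1 + \<tau>) ^ (k - 2)"
  shows "summable (\<lambda>n. L (k - 1) n powr \<tau>)"
proof -
  obtain j where k: "k = Suc (Suc j)" using \<open>2 \<le> k\<close> by (auto dest: le_Suc_ex)
  have "summable (\<lambda>n. L (Suc j) n powr (u / (1 + \<tau>) ^ j))"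
    using summable_powr_nested_chain[of k L C \<tau> u j, OF nonneg le] assms(3-6) k by simp
  moreover have "0 < u / (1 + \<tau>) ^ j" "u / (1 + \<tau>) ^ j \<le> \<tau>"
    using assms(4,5,8) by (simp_all add: k pos_divide_le_eq)
  moreover have "0 \<le> L (Suc j) n" for n using nonneg k by simp
  ultimately show ?thesis
    unfolding k by (simp add: summable_powr_larger_exponent)
qed

lemma lower_bound_of_summable_decrements:
  fixes \<rho> x :: "nat \<Rightarrow> real"
  assumes "\<And>n. \<rho> n - x n \<le> \<rho> (Suc n)" "summable x" "\<And>n. 0 \<le> x n"
  shows "\<rho> 0 - suminf x \<le> \<rho> n"
proof -
  have "\<rho> 0 - (\<Sum>j<n. x j) \<le> \<rho> n"
  proof (induction n)
    case (Suc n)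
    have "\<rho> 0 - (\<Sum>j<Suc n. x j) = (\<rho> 0 - (\<Sum>j<n. x j)) - x n" by simp
    with Suc.IH assms(1)[of n] show ?case by linarith
  qed simp
  moreover have "(\<Sum>j<n. x j) \<le> suminf x"
    using sum_le_suminf[OF assms(2), of "{..<n}"] assms(3) by blast
  ultimately show ?thesis by linarith
qed

lemma nonpos_if_le_powr_of_summable:
  fixes L :: "nat \<Rightarrow> real"
  assumes summ: "summable (\<lambda>n. L n powr \<tau>)" and "\<And>n. 0 < L n"
    and "\<And>n. c0 * L n \<le> C * L n powr (1 + \<tau>)"
  shows "c0 \<le> 0"
proof -
  have "c0 \<le> C * L n powr \<tau>" for n
  proof -
    have "c0 * L n \<le> (C * L n powr \<tau>) * L n"
      using assms(2,3)[of n] by (simp add: powr_add mult.assoc)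
    then show ?thesis using assms(2)[of n] by simp
  qed
  moreover have "(\<lambda>n. C * L n powr \<tau>) \<longlonglongrightarrow> 0"
    using tendsto_mult_right_zero[OF summable_LIMSEQ_zero[OF summ]] .
  ultimately show ?thesis by (intro LIMSEQ_le_const) auto
qed

section \<open>Nestings\<close>

lemma open_subint_endpoints:
  "open_subint a b J \<Longrightarrow> a \<le> Inf J \<and> Inf J < Sup J \<and> Sup J \<le> b \<and> J = {Inf J<..<Sup J}"
  unfolding open_subint_def by auto

lemma is_nesting_endpoints:
  assumes "is_nesting a b k u S" "1 \<le> k"
  obtains c d :: "nat \<Rightarrow> real" and s where
    "\<And>i. i \<in> {1..k} \<Longrightarrow> a \<le> c i \<and> c i < d i \<and> d i \<le> b"
    "\<And>i. i \<in> {1..<k} \<Longrightarrow> c i \<le> c (Suc i) \<and> d (Suc i) \<le> d i"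
    "\<And>n. s n \<in> S"
    "summable (\<lambda>n. (wrd s n (d 1) - wrd s n (c 1)) powr u)"
    "\<And>i n. i \<in> {1..<k} \<Longrightarrow> \<exists>g\<in>S.
        g ` {wrd s n (c (Suc i))<..<wrd s n (d (Suc i))} \<inter> {wrd s n (c (Suc i))<..<wrd s n (d (Suc i))} = {} \<and>
        g ` {wrd s n (c i)<..<wrd s n (d i)} = {wrd s n (c i)<..<wrd s n (d i)}"
proof -
  from assms(1) obtain J s where S: "S \<subseteq> Homeo_plus a b"
    and J: "\<forall>i\<in>{1..k}. open_subint a b (J i)" and sub: "\<forall>i\<in>{1..<k}. J (Suc i) \<subset> J i"
    and sS: "\<forall>n. s n \<in> S" and summ: "summable (\<lambda>n. ilen (wrd s n ` J 1) powr u)"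
    and disp: "\<forall>i\<in>{2..k}. \<forall>n. \<exists>g\<in>S. g ` (wrd s n ` J i) \<inter> wrd s n ` J i = {} \<and>
                 g ` (wrd s n ` J (i - 1)) = wrd s n ` J (i - 1)"
    unfolding is_nesting_def by (elim conjE exE) (rule that)
  have homeo: "wrd s n \<in> Homeo_plus a b" for n
    using S sS by (intro wrd_Homeo_plus) auto
  define c d where "c i = Inf (J i)" and "d i = Sup (J i)" for i
  have Jcd: "a \<le> c i \<and> c i < d i \<and> d i \<le> b \<and> J i = {c i<..<d i}" if "i \<in> {1..k}" for i
    using open_subint_endpoints J that unfolding c_def d_def by blast
  have image: "wrd s n ` J i = {wrd s n (c i)<..<wrd s n (d i)}" if "i \<in> {1..k}" for i n
    using Homeo_plus_image_greaterThanLessThan[OF homeo] Jcd[OF that] by metis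
  show ?thesis
  proof (rule that)
    show "a \<le> c i \<and> c i < d i \<and> d i \<le> b" if "i \<in> {1..k}" for i
      using Jcd[OF that] by simp
    show "c i \<le> c (Suc i) \<and> d (Suc i) \<le> d i" if i: "i \<in> {1..<k}" for i
    proof -
      have "J (Suc i) \<subseteq> J i" using sub i by auto
      then show ?thesis
        using Jcd[of i] Jcd[of "Suc i"] i by (simp add: greaterThanLessThan_subseteq_greaterThanLessThan)
    qed
    have "ilen (wrd s n ` J 1) = wrd s n (d 1) - wrd s n (c 1)" for n
      using image[of 1 n] Homeo_plus_strict_mono[OF homeo] Jcd[of 1] assms(2)
      by (simp add: ilen_def)
    then show "summable (\<lambda>n. (wrd s n (d 1) - wrd s n (c 1)) powr u)"
      using summ by simp
    show "\<exists>g\<in>S.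
        g ` {wrd s n (c (Suc i))<..<wrd s n (d (Suc i))} \<inter> {wrd s n (c (Suc i))<..<wrd s n (d (Suc i))} = {} \<and>
        g ` {wrd s n (c i)<..<wrd s n (d i)} = {wrd s n (c i)<..<wrd s n (d i)}"
      if i: "i \<in> {1..<k}" for i n
      using disp[rule_format, of "Suc i" n] i image[of i n] image[of "Suc i" n] by simp
  qed (use sS in blast)
qed

lemma is_nesting_length_recursion:
  assumes nest: "is_nesting a b k u S" and "1 \<le> k"
    and holder: "\<forall>f\<in>S. holder_C1_on {a..b} \<tau> m C f" and "0 \<le> C" "0 \<le> \<tau>"
  obtains c d :: "nat \<Rightarrow> real" and s where
    "\<And>i. i \<in> {1..k} \<Longrightarrow> a \<le> c i \<and> c i < d i \<and> d i \<le> b"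
    "\<And>i. i \<in> {1..<k} \<Longrightarrow> c i \<le> c (Suc i) \<and> d (Suc i) \<le> d i"
    "\<And>n. s n \<in> S"
    "summable (\<lambda>n. (wrd s n (d 1) - wrd s n (c 1)) powr u)"
    "\<And>i n. i \<in> {1..<k} \<Longrightarrow>
        wrd s n (d (Suc i)) - wrd s n (c (Suc i)) \<le> C * (wrd s n (d i) - wrd s n (c i)) powr (1 + \<tau>)"
proof -
  obtain c d :: "nat \<Rightarrow> real" and s where J: "\<And>i. i \<in> {1..k} \<Longrightarrow> a \<le> c i \<and> c i < d i \<and> d i \<le> b"
    and nested: "\<And>i. i \<in> {1..<k} \<Longrightarrow> c i \<le> c (Suc i) \<and> d (Suc i) \<le> d i"
    and sS: "\<And>n. s n \<in> S" and summ: "summable (\<lambda>n. (wrd s n (d 1) - wrd s n (c 1)) powr u)"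
    and disp: "\<And>i n. i \<in> {1..<k} \<Longrightarrow> \<exists>g\<in>S.
        g ` {wrd s n (c (Suc i))<..<wrd s n (d (Suc i))} \<inter> {wrd s n (c (Suc i))<..<wrd s n (d (Suc i))} = {} \<and>
        g ` {wrd s n (c i)<..<wrd s n (d i)} = {wrd s n (c i)<..<wrd s n (d i)}"
    using is_nesting_endpoints[OF nest \<open>1 \<le> k\<close>] by blast
  have homeo: "S \<subseteq> Homeo_plus a b" using nest by (simp add: is_nesting_def)
  have words: "wrd s n \<in> Homeo_plus a b" for n using homeo sS by (intro wrd_Homeo_plus) auto
  show ?thesis
  proof (rule that[OF J nested sS summ])
    fix i n assume i: "i \<in> {1..<k}"
    obtain g where "g \<in> S"
      and disj: "g ` {wrd s n (c (Suc i))<..<wrd s n (d (Suc i))} \<inter> {wrd s n (c (Suc i))<..<wrd s n (d (Suc i))} = {}"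
      and inv: "g ` {wrd s n (c i)<..<wrd s n (d i)} = {wrd s n (c i)<..<wrd s n (d i)}"
      using disp[OF i] by blast
    have "a \<le> c i" "c i \<le> c (Suc i)" "c (Suc i) < d (Suc i)" "d (Suc i) \<le> d i" "d i \<le> b"
      using J[of i] J[of "Suc i"] nested[OF i] i by auto
    then have "a \<le> wrd s n (c i) \<and> wrd s n (c i) \<le> wrd s n (c (Suc i)) \<and>
        wrd s n (c (Suc i)) < wrd s n (d (Suc i)) \<and> wrd s n (d (Suc i)) \<le> wrd s n (d i) \<and>
        wrd s n (d i) \<le> b"
      by (rule Homeo_plus_nested[OF words])
    moreover have "g \<in> Homeo_plus a b" "holder_C1_on {a..b} \<tau> m C g"
      using \<open>g \<in> S\<close> homeo holder by auto
    ultimately show "wrd s n (d (Suc i)) - wrd s n (c (Suc i))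
        \<le> C * (wrd s n (d i) - wrd s n (c i)) powr (1 + \<tau>)"
      using Homeo_plus_displaced_subinterval_length[OF _ _ _ _ _ _ _ _ _ inv disj] assms(4,5)
      by simp
  qed
qed

text \<open>The logarithm of the length ratio drops at step n by at most C/m times the n-th term
  of the summable series.\<close>
lemma wrd_length_ratio_bounded_below:
  assumes homeo: "\<And>n. s n \<in> Homeo_plus a b" and holder: "\<And>n. holder_C1_on {a..b} \<tau> m C (s n)"
    and "0 < m" "0 \<le> C" "0 \<le> \<tau>"
    and "a \<le> c1" "c1 \<le> c2" "c2 < d2" "d2 \<le> d1" "d1 \<le> b"
    and summ: "summable (\<lambda>n. (wrd s n d1 - wrd s n c1) powr \<tau>)"
  shows "\<exists>c0>0. \<forall>n. c0 * (wrd s n d1 - wrd s n c1) \<le> wrd s n d2 - wrd s n c2"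
proof -
  define L1 L2 where "L1 n = wrd s n d1 - wrd s n c1" and "L2 n = wrd s n d2 - wrd s n c2" for n
  define \<rho> where "\<rho> n = ln (L2 n) - ln (L1 n)" for n
  have order: "a \<le> wrd s n c1 \<and> wrd s n c1 \<le> wrd s n c2 \<and> wrd s n c2 < wrd s n d2 \<and>
      wrd s n d2 \<le> wrd s n d1 \<and> wrd s n d1 \<le> b" for n
    by (rule Homeo_plus_nested[OF wrd_Homeo_plus[OF homeo] assms(6-10)])
  have pos: "0 < L1 n" "0 < L2 n" for n using order[of n] by (auto simp: L1_def L2_def)
  have step: "\<rho> n - C / m * L1 n powr \<tau> \<le> \<rho> (Suc n)" for n
  proof -
    have "holder_C1_on {wrd s n c1..wrd s n d1} \<tau> m C (s n)"
      using holder_C1_on_subset[OF holder] order[of n] by auto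
    from holder_C1_on_ln_distortion[OF this \<open>0 < m\<close> \<open>0 \<le> C\<close> \<open>0 \<le> \<tau>\<close>] order[of n]
    have "ln (L2 n) - ln (L1 n) - C / m * L1 n powr \<tau> \<le> ln (L2 (Suc n)) - ln (L1 (Suc n))"
      unfolding L1_def L2_def by simp
    then show ?thesis unfolding \<rho>_def .
  qed
  have "summable (\<lambda>n. C / m * L1 n powr \<tau>)"
    using summ unfolding L1_def by (rule summable_mult)
  moreover have "0 \<le> C / m * L1 n powr \<tau>" for n using assms(3,4) by simp
  ultimately have bound: "\<rho> 0 - (\<Sum>n. C / m * L1 n powr \<tau>) \<le> \<rho> n" for n
    using lower_bound_of_summable_decrements[of \<rho> "\<lambda>n. C / m * L1 n powr \<tau>", OF step] by blast
  show ?thesis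
  proof (intro exI[of _ "exp (\<rho> 0 - (\<Sum>n. C / m * L1 n powr \<tau>))"] conjI allI)
    fix n
    have "exp (\<rho> 0 - (\<Sum>n. C / m * L1 n powr \<tau>)) * L1 n \<le> exp (\<rho> n) * L1 n"
      using bound[of n] pos[of n] by (intro mult_right_mono) auto
    also have "\<dots> = L2 n" using pos[of n] by (simp add: \<rho>_def exp_diff)
    finally show "exp (\<rho> 0 - (\<Sum>n. C / m * L1 n powr \<tau>)) * (wrd s n d1 - wrd s n c1)
        \<le> wrd s n d2 - wrd s n c2" by (simp add: L1_def L2_def)
  qed simp
qed

lemma not_is_nesting_if_holder_C1_on:
  assumes "2 \<le> k" "0 < u" "0 < \<tau>" "u \<le> \<tau> * (1 + \<tau>) ^ (k - 2)"
    and holder: "\<forall>f\<in>S. holder_C1_on {a..b} \<tau> m C f" and "0 < m" "0 \<le> C"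
  shows "\<not> is_nesting a b k u S"
proof
  assume nest: "is_nesting a b k u S"
  then have homeo: "S \<subseteq> Homeo_plus a b" by (simp add: is_nesting_def)
  obtain j where k: "k = Suc (Suc j)" using \<open>2 \<le> k\<close> by (auto dest: le_Suc_ex)
  obtain c d :: "nat \<Rightarrow> real" and s where J: "\<And>i. i \<in> {1..k} \<Longrightarrow> a \<le> c i \<and> c i < d i \<and> d i \<le> b"
    and nested: "\<And>i. i \<in> {1..<k} \<Longrightarrow> c i \<le> c (Suc i) \<and> d (Suc i) \<le> d i"
    and sS: "\<And>n. s n \<in> S" and summ: "summable (\<lambda>n. (wrd s n (d 1) - wrd s n (c 1)) powr u)"
    and shrink: "\<And>i n. i \<in> {1..<k} \<Longrightarrow>
        wrd s n (d (Suc i)) - wrd s n (c (Suc i)) \<le> C * (wrd s n (d i) - wrd s n (c i)) powr (1 + \<tau>)"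
    using is_nesting_length_recursion[OF nest _ holder] \<open>0 \<le> C\<close> \<open>0 < \<tau>\<close> k by auto
  define L where "L i n = wrd s n (d i) - wrd s n (c i)" for i n
  have L_pos: "0 < L i n" if "i \<in> {1..k}" for i n
    using Homeo_plus_strict_mono[OF wrd_Homeo_plus[OF subsetD[OF homeo sS]]] J[OF that]
    by (simp add: L_def)
  have L_shrink: "L (Suc i) n \<le> C * L i n powr (1 + \<tau>)" if "i \<in> {1..<k}" for i n
    using shrink[OF that] by (simp add: L_def)
  have "summable (\<lambda>n. L 1 n powr u)" using summ by (simp add: L_def)
  then have summ_\<tau>: "summable (\<lambda>n. L (Suc j) n powr \<tau>)"
    using summable_powr_nested_chain_last[of k L C \<tau> u, OF less_imp_le[OF L_pos] L_shrink]
      assms(2-4) \<open>0 \<le> C\<close> k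
    by simp
  obtain c0 where "c0 > 0" and ratio: "\<And>n. c0 * L (Suc j) n \<le> L k n"
    using wrd_length_ratio_bounded_below[of s a b \<tau> m C "c (Suc j)" "c k" "d k" "d (Suc j)"]
      summ_\<tau> homeo holder sS J[of "Suc j"] J[of k] nested[of "Suc j"] \<open>0 < m\<close> \<open>0 \<le> C\<close> \<open>0 < \<tau>\<close> k
    by (auto simp: L_def)
  have "c0 * L (Suc j) n \<le> C * L (Suc j) n powr (1 + \<tau>)" for n
    using ratio[of n] L_shrink[of "Suc j" n] k by simp
  then have "c0 \<le> 0"
    using nonpos_if_le_powr_of_summable[OF summ_\<tau>, of c0 C] L_pos[of "Suc j"] k by simp
  with \<open>c0 > 0\<close> show False by simp
qed

theorem lemma3p4:
  fixes a b u \<tau> :: real and k :: nat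
  assumes "k \<ge> 2" and "0 < u" and "u \<le> 1" and "0 < \<tau>" and "\<tau> < 1"
    and "\<tau> * (1 + \<tau>) ^ (k - 2) \<ge> u"
  shows "\<not> (\<exists>S. S \<subseteq> Diff_plus_1_tau a b \<tau> \<and> is_nesting a b k u S)"
proof
  assume "\<exists>S. S \<subseteq> Diff_plus_1_tau a b \<tau> \<and> is_nesting a b k u S"
  then obtain S where Diff: "S \<subseteq> Diff_plus_1_tau a b \<tau>" and nest: "is_nesting a b k u S" by blast
  have "finite S" using nest by (simp add: is_nesting_def)
  then obtain m C where "0 < m" "0 < C" and "\<forall>f\<in>S. holder_C1_on {a..b} \<tau> m C f"
    using finite_Diff_plus_1_tau_uniform_holder_C1_on Diff by blast
  then show False
    using not_is_nesting_if_holder_C1_on[of k u \<tau> S a b m C] nest assms(1,2,4,6) by simp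
qed

end
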